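(* Let $\lambda<0$, $C>0$ and $e_0>0$ be real numbers, and define for $t\ge 0$ $$\delta(t)=\Big(e_0^2 e^{\lambda t}+\frac{C^2}{\lambda^2}\Big(t^2+\frac{2t}{\lambda}+\frac{2}{\lambda^2}\big(1-e^{\lambda t}\big)\Big)\Big)^{1/2}.$$ Let $G=\frac{\sqrt{3}\,e_0|\lambda|}{C}$ and let $\alpha=1+\frac{|\lambda|G}{4}-\sqrt{1+\big(\frac{\lambda G}{4}\big)^2}$, which is the smallest positive root of $-\frac12|\lambda|G+\big(2+\frac12|\lambda|G\big)\alpha-\alpha^2=0$. Suppose $\frac{|\lambda|G}{4}<1$. Then $0<\alpha<1$, and $\delta(t)\le e_0$ for all $t\in[0,G(1-\alpha)]$.
   Context: In the paper this is applied with $\lambda=\lambda_u$, the (negative) one-sided Lipschitz constant of a vector field $f_u$ on $S=[0,1]^M$, and $C=C_u=\sup_{y\in S}L_u\|f_u(y)\|$ where $L_u$ is the Lipschitz constant of $f_u$ on $S$; then $\delta(t)$ is the error bound $\delta^u_{t,e_0}$ between the exact solution of $dy/dt=f_u(y)$ and its explicit Euler approximation $z_0+t f_u(z_0)$ with initial error $e_0=\|y_0-z_0\|$. *)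

theory Defs
  imports Complex_Main
begin

text \<open>Error bound delta(t) between the exact solution and the explicit Euler step.\<close>
definition euler_delta :: "real \<Rightarrow> real \<Rightarrow> real \<Rightarrow> real \<Rightarrow> real" where
  "euler_delta lam C e0 t =
     sqrt (e0\<^sup>2 * exp (lam * t)
           + C\<^sup>2 / lam\<^sup>2 * (t\<^sup>2 + 2 * t / lam + 2 / lam\<^sup>2 * (1 - exp (lam * t))))"

end

theory Submission
  imports Defs
begin

text \<open>With \<open>s = |\<lambda>| t\<close> and \<open>u = e\<^sup>-\<^sup>s\<close> one has
  \<open>\<delta>(t)\<^sup>2 = e\<^sub>0\<^sup>2 u + C\<^sup>2/\<lambda>\<^sup>4 (s\<^sup>2 - 2s + 2(1 - u))\<close>. The Taylor bounds
  \<open>1 - s + s\<^sup>2/2 - s\<^sup>3/6 \<le> e\<^sup>-\<^sup>s \<le> 1 - s + s\<^sup>2/2\<close> give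
  \<open>\<delta>(t)\<^sup>2 \<le> e\<^sub>0\<^sup>2 - e\<^sub>0\<^sup>2 (s - s\<^sup>2/2) + C\<^sup>2 s\<^sup>3/(3\<lambda>\<^sup>4)\<close>, so \<open>\<delta>(t) \<le> e\<^sub>0\<close> as soon as
  \<open>C\<^sup>2 t\<^sup>2 \<le> 3 e\<^sub>0\<^sup>2 \<lambda>\<^sup>2 (1 - |\<lambda>| t/2)\<close>. With \<open>G\<close> as given this is the quadratic
  inequality \<open>t\<^sup>2 + 2aGt \<le> G\<^sup>2\<close> for \<open>a = |\<lambda>|G/4\<close>, whose positive root is
  \<open>G(\<surd>(1 + a\<^sup>2) - a) = G(1 - \<alpha>)\<close>.\<close>

lemma exp_minus_le_taylor2:
  fixes s :: real
  assumes "0 \<le> s"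
  shows "exp (- s) \<le> 1 - s + s\<^sup>2 / 2"
proof -
  let ?f = "\<lambda>x::real. 1 - x + x\<^sup>2 / 2 - exp (- x)"
  have "?f 0 \<le> ?f s"
  proof (rule DERIV_nonneg_imp_increasing_open[OF assms])
    fix x :: real
    have "DERIV ?f x :> (- 1 + x + exp (- x))"
      by (auto intro!: derivative_eq_intros simp: power2_eq_square)
    moreover have "- 1 + x + exp (- x) \<ge> 0"
      using exp_ge_add_one_self[of "- x"] by simp
    ultimately show "\<exists>y. DERIV ?f x :> y \<and> y \<ge> 0" by blast
  qed (intro continuous_intros; simp)
  then show ?thesis by simp
qed

lemma exp_minus_ge_taylor3:
  fixes s :: real
  assumes "0 \<le> s"
  shows "1 - s + s\<^sup>2 / 2 - s ^ 3 / 6 \<le> exp (- s)"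
proof -
  let ?f = "\<lambda>x::real. exp (- x) - 1 + x - x\<^sup>2 / 2 + x ^ 3 / 6"
  have "?f 0 \<le> ?f s"
  proof (rule DERIV_nonneg_imp_increasing_open[OF assms])
    fix x :: real
    assume "0 < x"
    have "DERIV ?f x :> (- exp (- x) + 1 - x + x\<^sup>2 / 2)"
      by (auto intro!: derivative_eq_intros simp: power2_eq_square)
    moreover have "- exp (- x) + 1 - x + x\<^sup>2 / 2 \<ge> 0"
      using exp_minus_le_taylor2[of x] \<open>0 < x\<close> by simp
    ultimately show "\<exists>y. DERIV ?f x :> y \<and> y \<ge> 0" by blast
  qed (intro continuous_intros; simp)
  then show ?thesis by simp
qed

lemma euler_delta_square_arg_eq:
  fixes lam C e0 t :: real
  assumes "lam < 0"
  defines "s \<equiv> - lam * t"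
  shows "e0\<^sup>2 * exp (lam * t) + C\<^sup>2 / lam\<^sup>2 * (t\<^sup>2 + 2 * t / lam + 2 / lam\<^sup>2 * (1 - exp (lam * t)))
       = e0\<^sup>2 * exp (- s) + C\<^sup>2 / lam ^ 4 * (s\<^sup>2 - 2 * s + 2 * (1 - exp (- s)))"
  using assms by (simp add: field_simps power2_eq_square power4_eq_xxxx)

lemma euler_delta_le_init_error:
  fixes lam C e0 t :: real
  assumes "lam < 0" and "0 \<le> e0" and "0 \<le> t"
    and quadratic: "C\<^sup>2 * t\<^sup>2 \<le> 3 * e0\<^sup>2 * lam\<^sup>2 * (1 + lam * t / 2)"
  shows "euler_delta lam C e0 t \<le> e0"
proof -
  define s where "s = - lam * t"
  define u where "u = exp (- s)"
  have "0 \<le> s" using assms s_def by (simp add: mult_nonpos_nonneg)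
  have "C\<^sup>2 / lam ^ 4 * (s\<^sup>2 - 2 * s + 2 * (1 - u)) \<le> C\<^sup>2 / lam ^ 4 * (s ^ 3 / 3)"
    using exp_minus_ge_taylor3[OF \<open>0 \<le> s\<close>] by (intro mult_left_mono) (auto simp: u_def)
  also have "\<dots> = (C\<^sup>2 * t\<^sup>2) * (t / (- 3 * lam))"
    using assms(1) by (simp add: s_def field_simps power2_eq_square power4_eq_xxxx power3_eq_cube)
  also have "\<dots> \<le> (3 * e0\<^sup>2 * lam\<^sup>2 * (1 + lam * t / 2)) * (t / (- 3 * lam))"
    using quadratic assms(1,3) by (intro mult_right_mono) (auto simp: divide_nonneg_neg)
  also have "\<dots> = e0\<^sup>2 * (s - s\<^sup>2 / 2)"
    using assms(1) by (simp add: s_def field_simps power2_eq_square)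
  also have "\<dots> \<le> e0\<^sup>2 * (1 - u)"
    using exp_minus_le_taylor2[OF \<open>0 \<le> s\<close>] by (intro mult_left_mono) (auto simp: u_def)
  finally have "e0\<^sup>2 * u + C\<^sup>2 / lam ^ 4 * (s\<^sup>2 - 2 * s + 2 * (1 - u)) \<le> e0\<^sup>2"
    by (simp add: algebra_simps)
  moreover have "euler_delta lam C e0 t
      = sqrt (e0\<^sup>2 * u + C\<^sup>2 / lam ^ 4 * (s\<^sup>2 - 2 * s + 2 * (1 - u)))"
    unfolding euler_delta_def u_def s_def by (simp only: euler_delta_square_arg_eq[OF assms(1)])
  ultimately have "euler_delta lam C e0 t \<le> sqrt (e0\<^sup>2)"
    by (simp only: real_sqrt_le_mono)
  then show ?thesis using assms(2) by simp
qed

lemma quadratic_le_below_positive_root: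
  fixes a G t :: real
  assumes "0 \<le> a" and "0 \<le> G" and "0 \<le> t" and "t \<le> G * (sqrt (1 + a\<^sup>2) - a)"
  shows "t\<^sup>2 + 2 * a * G * t \<le> G\<^sup>2"
proof -
  have "(t + a * G)\<^sup>2 \<le> (G * sqrt (1 + a\<^sup>2))\<^sup>2"
    using assms by (intro power_mono) (auto simp: algebra_simps)
  then show ?thesis by (simp add: power2_eq_square algebra_simps)
qed

lemma sqrt_one_plus_square_bounds:
  fixes a :: real
  assumes "0 < a"
  shows "a < sqrt (1 + a\<^sup>2)" and "sqrt (1 + a\<^sup>2) < 1 + a"
proof -
  show "a < sqrt (1 + a\<^sup>2)"
    using real_sqrt_less_mono[of "a\<^sup>2" "1 + a\<^sup>2"] assms by simp
  have "1 + a\<^sup>2 < (1 + a)\<^sup>2" using assms by (simp add: power2_eq_square algebra_simps)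
  then have "sqrt (1 + a\<^sup>2) < sqrt ((1 + a)\<^sup>2)" by (simp only: real_sqrt_less_iff)
  then show "sqrt (1 + a\<^sup>2) < 1 + a" using assms by simp
qed

theorem lemma1:
  fixes lam C e0 G \<alpha> :: real
  assumes "lam < 0" and "C > 0" and "e0 > 0"
    and "G = sqrt 3 * e0 * \<bar>lam\<bar> / C"
    and "\<alpha> = 1 + \<bar>lam\<bar> * G / 4 - sqrt (1 + (lam * G / 4)\<^sup>2)"
    and "\<bar>lam\<bar> * G / 4 < 1"
  shows "0 < \<alpha> \<and> \<alpha> < 1 \<and>
         (\<forall>t \<in> {0 .. G * (1 - \<alpha>)}. euler_delta lam C e0 t \<le> e0)"
proof -
  define a where "a = \<bar>lam\<bar> * G / 4"
  have "0 < G"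
    unfolding assms(4) using assms(1-3) by (intro divide_pos_pos mult_pos_pos) auto
  then have "0 < a" using assms(1) a_def by (simp add: mult_neg_pos)
  have \<alpha>: "\<alpha> = 1 + a - sqrt (1 + a\<^sup>2)"
    using assms(5) by (simp add: a_def power2_eq_square)
  have G_sq: "C\<^sup>2 * G\<^sup>2 = 3 * e0\<^sup>2 * lam\<^sup>2"
    using assms(2,4) by (simp add: power_mult_distrib power_divide)
  have "euler_delta lam C e0 t \<le> e0" if "0 \<le> t" "t \<le> G * (1 - \<alpha>)" for t
  proof (rule euler_delta_le_init_error)
    have "t\<^sup>2 + 2 * a * G * t \<le> G\<^sup>2"
      using that \<open>0 < a\<close> \<open>0 < G\<close> by (intro quadratic_le_below_positive_root) (auto simp: \<alpha>)
    then have "t\<^sup>2 \<le> G\<^sup>2 * (1 + lam * t / 2)"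
      using assms(1) by (simp add: a_def power2_eq_square algebra_simps)
    from mult_left_mono[OF this, of "C\<^sup>2"]
    show "C\<^sup>2 * t\<^sup>2 \<le> 3 * e0\<^sup>2 * lam\<^sup>2 * (1 + lam * t / 2)"
      by (simp only: G_sq zero_le_power2 flip: mult.assoc)
  qed (use assms that in auto)
  then show ?thesis
    using sqrt_one_plus_square_bounds[OF \<open>0 < a\<close>] by (auto simp: \<alpha>)
qed

end
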